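(* For $\beta\in\{1,4\}$ write the large-$N$ expansion of the bulk-scaled structure function as $\tilde S_{N,\beta}(\tau)\sim \tilde S_{0,\infty,\beta}(\tau)+N^{-2}\tilde S_{1,\infty,\beta}(\tau)+N^{-4}\tilde S_{2,\infty,\beta}(\tau)+\cdots$. Then for all $\tau>0$ with $\tau\ne1$ (and additionally $\tau\ne2$ when $\beta=4$), $$\tilde S_{1,\infty,\beta}(\tau)=c_\beta\,\tau^2\frac{d^2}{d\tau^2}\tilde S_{0,\infty,\beta}(\tau),$$ $$\tilde S_{2,\infty,\beta}(\tau)=d_\beta\Big(\tau^4\frac{d^4}{d\tau^4}\tilde S_{0,\infty,\beta}(\tau)+8\tau^3\frac{d^3}{d\tau^3}\tilde S_{0,\infty,\beta}(\tau)+12\tau^2\frac{d^2}{d\tau^2}\tilde S_{0,\infty,\beta}(\tau)\Big),$$ with $c_1=-\frac16$, $c_4=-\frac1{24}$, $d_1=\frac7{360}$, $d_4=\frac7{5760}$.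
   Context: $\psi$ is the digamma function. The bulk-scaled structure functions are defined for real $\tau$ and $N>0$ by: $\tilde S_{N,1}(\tau)=2|\tau|-|\tau|\big(\psi(|\tau|N+\tfrac{N+1}2)-\psi(\tfrac{N+1}2)\big)$ for $|\tau|<1$, $\tilde S_{N,1}(\tau)=2-|\tau|\big(\psi(|\tau|N+\tfrac{N+1}2)-\psi(|\tau|N+\tfrac{1-N}2)\big)$ for $|\tau|\ge1$; $\tilde S_{N,4}(\tau)=\frac{|\tau|}2\big(1+\frac12(\psi(N+\frac12)-\psi(N-|\tau|N+\frac12))\big)$ for $|\tau|<1$, $\tilde S_{N,4}(\tau)=\frac{|\tau|}2\big(1+\frac12(\psi(N+\frac12)-\psi(-N+|\tau|N+\frac12))\big)$ for $1<|\tau|<2-1/N$, $\tilde S_{N,4}(\tau)=1$ for $|\tau|\ge2-1/N$. These are $\frac{2\pi}NS_{N,\beta}(\tau N)$ for the structure function $S_{N,\beta}$ of the circular $\beta$ ensemble. The expansion coefficients $\tilde S_{l,\infty,\beta}$ are defined by the large-$N$ asymptotic expansion at fixed $\tau$, which contains only even powers of $1/N$. *)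

theory Defs
  imports "HOL-Analysis.Analysis"
begin

definition S1N :: "real \<Rightarrow> real \<Rightarrow> real" where
  "S1N N \<tau> =
    (if \<bar>\<tau>\<bar> < 1
     then 2 * \<bar>\<tau>\<bar> - \<bar>\<tau>\<bar> * (Digamma (\<bar>\<tau>\<bar> * N + (N + 1) / 2) - Digamma ((N + 1) / 2))
     else 2 - \<bar>\<tau>\<bar> * (Digamma (\<bar>\<tau>\<bar> * N + (N + 1) / 2) - Digamma (\<bar>\<tau>\<bar> * N + (1 - N) / 2)))"

text \<open>Bulk-scaled structure function for beta = 4. At |tau| = 1 (not covered by the
  paper's case split) we use the formula of the middle range; this value is irrelevant
  to the theorem, where tau = 1 is excluded.\<close>
definition S4N :: "real \<Rightarrow> real \<Rightarrow> real" where
  "S4N N \<tau> =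
    (if \<bar>\<tau>\<bar> < 1
     then \<bar>\<tau>\<bar> / 2 * (1 + (Digamma (N + 1/2) - Digamma (N - \<bar>\<tau>\<bar> * N + 1/2)) / 2)
     else if \<bar>\<tau>\<bar> < 2 - 1 / N
     then \<bar>\<tau>\<bar> / 2 * (1 + (Digamma (N + 1/2) - Digamma (- N + \<bar>\<tau>\<bar> * N + 1/2)) / 2)
     else 1)"

definition SN :: "nat \<Rightarrow> real \<Rightarrow> real \<Rightarrow> real" where
  "SN \<beta> N \<tau> = (if \<beta> = 1 then S1N N \<tau> else S4N N \<tau>)"

definition S0inf :: "nat \<Rightarrow> real \<Rightarrow> real" where
  "S0inf \<beta> \<tau> = Lim at_top (\<lambda>N. SN \<beta> N \<tau>)"

definition S1inf :: "nat \<Rightarrow> real \<Rightarrow> real" where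
  "S1inf \<beta> \<tau> = Lim at_top (\<lambda>N. N^2 * (SN \<beta> N \<tau> - S0inf \<beta> \<tau>))"

definition S2inf :: "nat \<Rightarrow> real \<Rightarrow> real" where
  "S2inf \<beta> \<tau> = Lim at_top (\<lambda>N. N^4 * (SN \<beta> N \<tau> - S0inf \<beta> \<tau> - S1inf \<beta> \<tau> / N^2))"

definition cbeta :: "nat \<Rightarrow> real" where
  "cbeta \<beta> = (if \<beta> = 1 then - 1/6 else - 1/24)"

definition dbeta :: "nat \<Rightarrow> real" where
  "dbeta \<beta> = (if \<beta> = 1 then 7/360 else 7/5760)"

end

theory Submission
  imports Defs "HOL-Real_Asymp.Real_Asymp"
begin

(* On each of the ranges 0 < t < 1, t > 1 (beta = 1) and 0 < t < 1, 1 < t < 2, t > 2 (beta = 4),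
   and for large N, the structure function has the form
     S_N(t) = alpha + gamma t + B t (psi((a t + b) N + 1/2) - psi((a' t + b') N + 1/2))
   with b^2 = b'^2 = kappa^2. Inserting psi(z + 1/2) = ln z + 1/(24 z^2) - 7/(960 z^4) + O(z^-5) gives
     S0(t) = alpha + gamma t + B (t ln(a t + b) - t ln(a' t + b')),
     S1(t) = B t/24 ((a t + b)^-2 - (a' t + b')^-2),  S2(t) = -7 B t/960 ((a t + b)^-4 - (a' t + b')^-4).
   The operators t^2 D^2 and t^4 D^4 + 8 t^3 D^3 + 12 t^2 D^2 kill linear functions and map
   t ln(a t + b) to t - b^2 t/(a t + b)^2 and 6 t - 6 b^4 t/(a t + b)^4, whence
   c_beta = -1/(24 kappa^2) and d_beta = 7/(5760 kappa^4).
   The O(z^-5) remainder R of the digamma expansion tends to 0, and psi(z + 1) = psi(z) + 1/z makes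
   R(z) - R(z + 1) an explicit O(z^-7) function; summing these differences bounds R. *)

lemma sum_inverse_squares_le_2: "(\<Sum>k<n. 1 / (real k + 1)^2) \<le> 2"
proof -
  have "(\<Sum>k<n. 1 / (real k + 1)^2) \<le> 2 - 2 / (real n + 1)"
  proof (induction n)
    case (Suc n)
    have "1 / (real n + 1)^2 \<le> 2 / (real n + 1) - 2 / (real n + 2)"
      by (simp add: divide_simps power2_eq_square algebra_simps)
    with Suc show ?case by (simp add: add_ac)
  qed simp
  also have "\<dots> \<le> 2" by simp
  finally show ?thesis .
qed

lemma abs_le_from_unit_differences:
  fixes f :: "real \<Rightarrow> real" and n :: nat
  assumes lim: "(f \<longlongrightarrow> 0) at_top" and W: "W \<ge> 1"
    and step: "\<And>z. z \<ge> W \<Longrightarrow> \<bar>f z - f (z + 1)\<bar> \<le> K / z ^ (n + 2)"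
    and z: "z \<ge> W"
  shows "\<bar>f z\<bar> \<le> 2 * K / z ^ n"
proof -
  have z1: "z \<ge> 1" using W z by linarith
  have "0 \<le> K / z ^ (n + 2)" using step[OF z] by linarith
  hence K: "K \<ge> 0" using z1 by (simp add: zero_le_divide_iff) (smt (verit) mult_pos_pos zero_less_power)
  have term_bound: "\<bar>f (z + real k) - f (z + real k + 1)\<bar> \<le> K / z ^ n * (1 / (real k + 1)^2)" for k
  proof -
    have "z ^ n * (real k + 1)^2 \<le> (z + real k) ^ n * (z + real k)^2"
      using z1 by (intro mult_mono power_mono) auto
    hence "z ^ n * (real k + 1)^2 \<le> (z + real k) ^ (n + 2)" by (simp only: power_add)
    hence "K / (z + real k) ^ (n + 2) \<le> K / (z ^ n * (real k + 1)^2)"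
      using K z1 by (intro divide_left_mono) auto
    with step[of "z + real k"] z show ?thesis by simp
  qed
  have partial: "\<bar>f z - f (z + real m)\<bar> \<le> 2 * K / z ^ n" for m
  proof -
    have "f z - f (z + real m) = (\<Sum>k<m. f (z + real k) - f (z + real k + 1))"
      by (induction m) (simp_all add: add_ac)
    hence "\<bar>f z - f (z + real m)\<bar> \<le> (\<Sum>k<m. K / z ^ n * (1 / (real k + 1)^2))"
      by (metis (no_types, lifting) order_trans sum_abs sum_mono term_bound)
    also have "\<dots> = K / z ^ n * (\<Sum>k<m. 1 / (real k + 1)^2)"
      by (simp add: sum_distrib_left)
    also have "\<dots> \<le> K / z ^ n * 2"
      using K z1 by (intro mult_left_mono sum_inverse_squares_le_2) auto
    finally show ?thesis by (simp add: mult.commute)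
  qed
  have "filterlim (\<lambda>m. z + real m) at_top sequentially"
    by (intro filterlim_tendsto_add_at_top[OF tendsto_const] filterlim_real_sequentially)
  hence "(\<lambda>m. \<bar>f z - f (z + real m)\<bar>) \<longlonglongrightarrow> \<bar>f z - 0\<bar>"
    by (intro tendsto_intros filterlim_compose[OF lim])
  thus ?thesis using partial by (intro LIMSEQ_le_const2) auto
qed

lemma bigo_from_unit_differences:
  fixes f :: "real \<Rightarrow> real" and n :: nat
  assumes lim: "(f \<longlongrightarrow> 0) at_top"
    and diff: "(\<lambda>z. f z - f (z + 1)) \<in> O(\<lambda>z. 1 / z ^ (n + 2))"
  shows "f \<in> O(\<lambda>z. 1 / z ^ n)"
proof -
  obtain K where K: "K > 0" and "\<forall>\<^sub>F z in at_top. \<bar>f z - f (z + 1)\<bar> \<le> K * \<bar>1 / z ^ (n + 2)\<bar>"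
    using diff by (elim landau_o.bigE) simp
  then obtain W0 where W0: "\<And>z. z \<ge> W0 \<Longrightarrow> \<bar>f z - f (z + 1)\<bar> \<le> K * \<bar>1 / z ^ (n + 2)\<bar>"
    by (auto simp: eventually_at_top_linorder)
  define W where "W = max W0 1"
  have step: "\<bar>f z - f (z + 1)\<bar> \<le> K / z ^ (n + 2)" if "z \<ge> W" for z
    using W0[of z] that by (simp add: W_def)
  have bound: "\<bar>f z\<bar> \<le> 2 * K * \<bar>1 / z ^ n\<bar>" if "z \<ge> W" for z
    using abs_le_from_unit_differences[OF lim _ step that] that by (simp add: W_def)
  have "\<forall>\<^sub>F z in at_top. norm (f z) \<le> (2 * K) * norm (1 / z ^ n)"
    using eventually_ge_at_top[of W] by eventually_elim (use bound in simp)
  with K show ?thesis by (intro landau_o.bigI[of "2 * K"]) simp_all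
qed

lemma Digamma_real_LIMSEQ:
  assumes "(x::real) > 0"
  shows "(\<lambda>m. ln (real m) - (\<Sum>k<m. inverse (x + real k))) \<longlonglongrightarrow> Digamma x"
  using Digamma_LIMSEQ[of x] assms by simp

lemma Digamma_le_ln:
  assumes "(x::real) > 0" shows "Digamma x \<le> ln x"
proof (rule tendsto_le[OF _ _ Digamma_real_LIMSEQ[OF assms]])
  have "ln (x + real m) - ln x \<le> (\<Sum>k<m. inverse (x + real k))" for m
  proof (induction m)
    case (Suc m)
    have "ln (x + real m + 1) - ln (x + real m) \<le> 1 / (x + real m)"
      using ln_diff_le[of "x + real m + 1" "x + real m"] assms by simp
    with Suc show ?case by (simp add: add_ac inverse_eq_divide)
  qed simp
  thus "\<forall>\<^sub>F m in sequentially. ln (real m) - (\<Sum>k<m. inverse (x + real k)) \<le> ln (real m) - ln (x + real m) + ln x"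
    by (intro always_eventually) (smt (verit))
  show "(\<lambda>m. ln (real m) - ln (x + real m) + ln x) \<longlonglongrightarrow> ln x"
    using assms by real_asymp
qed simp

lemma Digamma_ge_ln_minus_inverse:
  assumes "(x::real) > 0" shows "ln x - 1 / x \<le> Digamma x"
proof (rule tendsto_le[OF _ LIMSEQ_Suc[OF Digamma_real_LIMSEQ[OF assms]]])
  have "(\<Sum>k<Suc m. inverse (x + real k)) \<le> 1 / x + ln (x + real m) - ln x" for m
  proof (induction m)
    case (Suc m)
    have "1 / (x + real m + 1) \<le> ln (x + real m + 1) - ln (x + real m)"
      using ln_diff_le[of "x + real m" "x + real m + 1"] assms by simp
    with Suc show ?case by (simp add: add_ac inverse_eq_divide)
  qed (simp add: inverse_eq_divide)
  thus "\<forall>\<^sub>F m in sequentially. ln (real (Suc m)) - 1 / x - ln (x + real m) + ln x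
          \<le> ln (real (Suc m)) - (\<Sum>k<Suc m. inverse (x + real k))"
    by (intro always_eventually) (smt (verit))
  show "(\<lambda>m. ln (real (Suc m)) - 1 / x - ln (x + real m) + ln x) \<longlonglongrightarrow> ln x - 1 / x"
    using assms by real_asymp
qed simp

lemma Digamma_minus_ln_tendsto_0: "((\<lambda>x::real. Digamma x - ln x) \<longlongrightarrow> 0) at_top"
proof (rule tendsto_sandwich[of "\<lambda>x. - 1 / x" _ _ "\<lambda>_. 0"])
  show "\<forall>\<^sub>F x in at_top. - 1 / x \<le> Digamma x - ln (x::real)"
    using eventually_gt_at_top[of 0] by eventually_elim (use Digamma_ge_ln_minus_inverse in force)
  show "\<forall>\<^sub>F x in at_top. Digamma x - ln (x::real) \<le> 0"
    using eventually_gt_at_top[of 0] by eventually_elim (use Digamma_le_ln in force)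
qed (real_asymp, simp)

lemma Digamma_half_shift_expansion:
  "((\<lambda>z::real. z^4 * (Digamma (z + 1/2) - ln z - 1 / (24 * z^2) + 7 / (960 * z^4))) \<longlongrightarrow> 0) at_top"
proof -
  define R where "R z = Digamma (z + 1/2) - ln z - 1 / (24 * z^2) + 7 / (960 * z^4)" for z :: real
  have "((\<lambda>z::real. Digamma (z + 1/2) - ln (z + 1/2)) \<longlongrightarrow> 0) at_top"
    by (rule filterlim_compose[OF Digamma_minus_ln_tendsto_0]) real_asymp
  moreover have "((\<lambda>z::real. ln (z + 1/2) - ln z - 1 / (24 * z^2) + 7 / (960 * z^4)) \<longlongrightarrow> 0) at_top"
    by real_asymp
  ultimately have "(R \<longlongrightarrow> 0) at_top"
    unfolding R_def by (auto dest: tendsto_add simp: algebra_simps)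
  moreover have "(\<lambda>z. R z - R (z + 1)) \<in> O(\<lambda>z. 1 / z ^ (5 + 2))"
  proof -
    have identity: "R z - R (z + 1) = ln (z + 1) - ln z - 1 / (z + 1/2) - 1 / (24 * z^2) + 1 / (24 * (z + 1)^2)
            + 7 / (960 * z^4) - 7 / (960 * (z + 1)^4)" if "z > 0" for z
      using Digamma_plus1[of "z + 1/2"] that by (simp add: R_def add_ac)
    have "\<forall>\<^sub>F z in at_top. R z - R (z + 1) = ln (z + 1) - ln z - 1 / (z + 1/2) - 1 / (24 * z^2)
            + 1 / (24 * (z + 1)^2) + 7 / (960 * z^4) - 7 / (960 * (z + 1)^4)"
      using eventually_gt_at_top[of 0] by eventually_elim (rule identity)
    thus ?thesis by (subst landau_o.big.in_cong) (assumption, real_asymp)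
  qed
  ultimately have "R \<in> O(\<lambda>z. 1 / z ^ 5)" by (rule bigo_from_unit_differences)
  then obtain c where "\<forall>\<^sub>F z in at_top. \<bar>R z\<bar> \<le> c * \<bar>1 / z ^ 5\<bar>"
    by (elim landau_o.bigE) simp
  hence "\<forall>\<^sub>F z in at_top. norm (z^4 * R z) \<le> c / z"
    using eventually_gt_at_top[of 0]
    by eventually_elim (simp add: abs_mult field_simps eval_nat_numeral)
  moreover have "((\<lambda>z::real. c / z) \<longlongrightarrow> 0) at_top" by real_asymp
  ultimately show ?thesis unfolding R_def by (rule Lim_null_comparison)
qed

lemma Digamma_scaled_expansion:
  assumes a: "a > 0"
  shows "((\<lambda>N::real. N^4 * (Digamma (a * N + 1/2) - ln N - ln a - 1 / (24 * a^2) / N^2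
            + 7 / (960 * a^4) / N^4)) \<longlongrightarrow> 0) at_top"
proof -
  have "filterlim (\<lambda>N::real. a * N) at_top at_top"
    using a by (intro filterlim_tendsto_pos_mult_at_top[OF tendsto_const] filterlim_ident)
  from tendsto_mult_right_zero[OF filterlim_compose[OF Digamma_half_shift_expansion this], of "1 / a^4"]
  show ?thesis
  proof (rule Lim_transform_eventually)
    show "\<forall>\<^sub>F N in at_top. 1 / a^4 * ((a * N)^4 * (Digamma (a * N + 1/2) - ln (a * N)
            - 1 / (24 * (a * N)^2) + 7 / (960 * (a * N)^4)))
          = N^4 * (Digamma (a * N + 1/2) - ln N - ln a - 1 / (24 * a^2) / N^2 + 7 / (960 * a^4) / N^4)"
      using eventually_gt_at_top[of 0]
      by eventually_elim (use a in \<open>simp add: ln_mult power_mult_distrib field_simps eval_nat_numeral\<close>)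
  qed
qed

lemma expansion_coefficients_tendsto:
  fixes f :: "real \<Rightarrow> real"
  assumes rem: "((\<lambda>N. N^4 * (f N - s0 - s1 / N^2 - s2 / N^4)) \<longlongrightarrow> 0) at_top"
  shows "(f \<longlongrightarrow> s0) at_top"
    and "((\<lambda>N. N^2 * (f N - s0)) \<longlongrightarrow> s1) at_top"
    and "((\<lambda>N. N^4 * (f N - s0 - s1 / N^2)) \<longlongrightarrow> s2) at_top"
proof -
  define r where "r N = N^4 * (f N - s0 - s1 / N^2 - s2 / N^4)" for N
  have inv: "((\<lambda>N::real. 1 / N^2) \<longlongrightarrow> 0) at_top" "((\<lambda>N::real. 1 / N^4) \<longlongrightarrow> 0) at_top"
    by real_asymp+
  have r: "(r \<longlongrightarrow> 0) at_top" using rem unfolding r_def .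
  have "\<forall>\<^sub>F N in at_top. N > (0::real)" by (rule eventually_gt_at_top)
  hence "\<forall>\<^sub>F N in at_top. s0 + s1 * (1 / N^2) + (s2 + r N) * (1 / N^4) = f N"
    and "\<forall>\<^sub>F N in at_top. s1 + (s2 + r N) * (1 / N^2) = N^2 * (f N - s0)"
    and "\<forall>\<^sub>F N in at_top. s2 + r N = N^4 * (f N - s0 - s1 / N^2)"
    by (eventually_elim, simp add: r_def field_simps eval_nat_numeral)+
  moreover have "((\<lambda>N. s0 + s1 * (1 / N^2) + (s2 + r N) * (1 / N^4)) \<longlongrightarrow> s0 + s1 * 0 + (s2 + 0) * 0) at_top"
    and "((\<lambda>N. s1 + (s2 + r N) * (1 / N^2)) \<longlongrightarrow> s1 + (s2 + 0) * 0) at_top"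
    and "((\<lambda>N. s2 + r N) \<longlongrightarrow> s2 + 0) at_top"
    by (intro tendsto_intros r inv)+
  ultimately show "(f \<longlongrightarrow> s0) at_top"
    and "((\<lambda>N. N^2 * (f N - s0)) \<longlongrightarrow> s1) at_top"
    and "((\<lambda>N. N^4 * (f N - s0 - s1 / N^2)) \<longlongrightarrow> s2) at_top"
    by (auto intro: Lim_transform_eventually)
qed

lemma Digamma_difference_expansion:
  fixes a b A C :: real and f :: "real \<Rightarrow> real"
  assumes a: "a > 0" and b: "b > 0"
    and f: "\<forall>\<^sub>F N in at_top. f N = A + C * (Digamma (a * N + 1/2) - Digamma (b * N + 1/2))"
  shows "((\<lambda>N. N^4 * (f N - (A + C * (ln a - ln b)) - C / 24 * (1 / a^2 - 1 / b^2) / N^2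
            - - 7 * C / 960 * (1 / a^4 - 1 / b^4) / N^4)) \<longlongrightarrow> 0) at_top"
proof -
  have "((\<lambda>N. N^4 * (Digamma (a * N + 1/2) - ln N - ln a - 1 / (24 * a^2) / N^2 + 7 / (960 * a^4) / N^4)
            - N^4 * (Digamma (b * N + 1/2) - ln N - ln b - 1 / (24 * b^2) / N^2 + 7 / (960 * b^4) / N^4))
          \<longlongrightarrow> 0) at_top"
    using tendsto_diff[OF Digamma_scaled_expansion[OF a] Digamma_scaled_expansion[OF b]] by simp
  from tendsto_mult_right_zero[OF this, of C]
  show ?thesis
  proof (rule Lim_transform_eventually)
    show "\<forall>\<^sub>F N in at_top. C * (N^4 * (Digamma (a * N + 1/2) - ln N - ln a - 1 / (24 * a^2) / N^2 + 7 / (960 * a^4) / N^4)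
            - N^4 * (Digamma (b * N + 1/2) - ln N - ln b - 1 / (24 * b^2) / N^2 + 7 / (960 * b^4) / N^4))
          = N^4 * (f N - (A + C * (ln a - ln b)) - C / 24 * (1 / a^2 - 1 / b^2) / N^2
            - - 7 * C / 960 * (1 / a^4 - 1 / b^4) / N^4)"
      using f eventually_gt_at_top[of 0]
    proof eventually_elim
      case (elim N)
      show ?case using elim(2) unfolding elim(1) by (simp add: field_simps eval_nat_numeral)
    qed
  qed
qed

lemma higher_deriv_eq_on_open:
  fixes f :: "real \<Rightarrow> real" and g :: "nat \<Rightarrow> real \<Rightarrow> real"
  assumes U: "open U" and f: "\<And>t. t \<in> U \<Longrightarrow> f t = g 0 t"
    and g: "\<And>k t. k < n \<Longrightarrow> t \<in> U \<Longrightarrow> (g k has_real_derivative g (Suc k) t) (at t)"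
  shows "k \<le> n \<Longrightarrow> t \<in> U \<Longrightarrow> (deriv ^^ k) f t = g k t"
proof (induction k arbitrary: t)
  case (Suc k)
  have "((deriv ^^ k) f has_real_derivative g (Suc k) t) (at t)"
    using Suc by (intro has_field_derivative_transform_within_open[OF g U]) auto
  thus ?case by (simp add: DERIV_imp_deriv)
qed (simp add: f)

definition xln_deriv :: "nat \<Rightarrow> real \<Rightarrow> real \<Rightarrow> real \<Rightarrow> real" where
  "xln_deriv k a c t = (case k of
      0 \<Rightarrow> t * ln (a * t + c)
    | Suc 0 \<Rightarrow> ln (a * t + c) + a * t / (a * t + c)
    | Suc (Suc m) \<Rightarrow> (-1)^m * fact m * a^(m + 1) * (a * t + c + real (m + 1) * c) / (a * t + c)^(m + 2))"

lemma xln_deriv_Suc_Suc_has_derivative: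
  assumes pos: "a * t + c > 0"
  shows "(xln_deriv (Suc (Suc m)) a c has_real_derivative xln_deriv (Suc (Suc (Suc m))) a c t) (at t)"
proof -
  obtain u where u_eq: "a * t + c = u" "c + a * t = u" and u: "u > 0" using pos by force
  have num: "((\<lambda>s. a * s + c + real (m + 1) * c) has_real_derivative a) (at t)"
    by (auto intro!: derivative_eq_intros)
  have "((\<lambda>s. a * s + c) has_real_derivative a) (at t)"
    by (auto intro!: derivative_eq_intros)
  from DERIV_power[OF this, of "m + 2"]
  have den: "((\<lambda>s. (a * s + c) ^ (m + 2)) has_real_derivative real (m + 2) * u ^ (m + 1) * a) (at t)"
    by (simp add: u_eq mult_ac)
  have "xln_deriv (Suc (Suc m)) a c
          = (\<lambda>s. (-1)^m * fact m * a^(m + 1) * ((a * s + c + real (m + 1) * c) / (a * s + c) ^ (m + 2)))"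
    by (simp add: xln_deriv_def fun_eq_iff)
  with DERIV_cmult[OF DERIV_divide[OF num den]] u
  have deriv: "(xln_deriv (Suc (Suc m)) a c has_real_derivative (-1)^m * fact m * a^(m + 1) *
      ((a * u ^ (m + 2) - (u + real (m + 1) * c) * (real (m + 2) * u ^ (m + 1) * a)) / (u ^ (m + 2) * u ^ (m + 2)))) (at t)"
    by (simp add: u_eq)
  have "a * u ^ (m + 2) - (u + real (m + 1) * c) * (real (m + 2) * u ^ (m + 1) * a)
          = - (real (m + 1) * a * (u + real (m + 2) * c) * u ^ (m + 1))"
    by (simp add: algebra_simps power_Suc)
  hence "(-1)^m * fact m * a^(m + 1) *
      ((a * u ^ (m + 2) - (u + real (m + 1) * c) * (real (m + 2) * u ^ (m + 1) * a)) / (u ^ (m + 2) * u ^ (m + 2)))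
        = xln_deriv (Suc (Suc (Suc m))) a c t"
    using u by (simp add: xln_deriv_def u_eq field_simps power_add)
  with deriv show ?thesis by simp
qed

lemma xln_deriv_has_derivative:
  assumes pos: "a * t + c > 0"
  shows "(xln_deriv k a c has_real_derivative xln_deriv (Suc k) a c t) (at t)"
proof -
  obtain u where u_eq: "a * t + c = u" "c + a * t = u" and u: "u > 0" using pos by force
  consider "k = 0" | "k = 1" | m where "k = Suc (Suc m)"
    by (metis One_nat_def not0_implies_Suc)
  then show ?thesis
  proof cases
    case 1
    show ?thesis unfolding 1 xln_deriv_def
      using pos by (auto intro!: derivative_eq_intros)
  next
    case 2
    show ?thesis unfolding 2 xln_deriv_def
      using u by (auto intro!: derivative_eq_intros simp: u_eq field_simps) (simp add: u_eq(1)[symmetric] algebra_simps)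
  next
    case 3
    show ?thesis unfolding 3 by (rule xln_deriv_Suc_Suc_has_derivative[OF pos])
  qed
qed

lemma xln_difference_higher_deriv:
  fixes F :: "real \<Rightarrow> real" and U :: "real set"
  assumes U: "open U" "\<tau> \<in> U"
    and pos: "\<And>t. t \<in> U \<Longrightarrow> a * t + b > 0 \<and> a' * t + b' > 0"
    and F: "\<And>t. t \<in> U \<Longrightarrow> F t = \<alpha> + \<gamma> * t + B * (xln_deriv 0 a b t - xln_deriv 0 a' b' t)"
    and k: "2 \<le> k"
  shows "(deriv ^^ k) F \<tau> = B * (xln_deriv k a b \<tau> - xln_deriv k a' b' \<tau>)"
proof -
  define g where "g j t = (if j = 0 then \<alpha> + \<gamma> * t else if j = 1 then \<gamma> else 0)
                          + B * (xln_deriv j a b t - xln_deriv j a' b' t)" for j t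
  have "(deriv ^^ k) F \<tau> = g k \<tau>"
  proof (rule higher_deriv_eq_on_open[OF U(1) _ _ order.refl U(2)])
    show "F t = g 0 t" if "t \<in> U" for t
      using F[OF that] by (simp add: g_def)
    show "(g j has_real_derivative g (Suc j) t) (at t)" if "t \<in> U" for j t
      using pos[OF that] unfolding g_def
      by (cases "j = 0"; cases "j = 1") (auto intro!: derivative_eq_intros xln_deriv_has_derivative)
  qed
  thus ?thesis using k by (simp add: g_def)
qed

lemma xln_second_order_identity:
  assumes "a * t + c \<noteq> 0"
  shows "t^2 * xln_deriv 2 a c t = t - c^2 * t / (a * t + c)^2"
proof -
  define u where "u = a * t + c"
  have u: "a * t + c = u" "u \<noteq> 0" and at: "a * t = u - c" using assms by (simp_all add: u_def)
  have "t^2 * xln_deriv 2 a c t = t * (a * t) * (u + c) / u^2"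
    by (simp add: xln_deriv_def numeral_2_eq_2 u(1) power2_eq_square)
  also have "\<dots> = t - c^2 * t / u^2"
    using u(2) unfolding at by (simp add: field_simps power2_eq_square)
  finally show ?thesis by (simp add: u(1))
qed

lemma xln_fourth_order_identity:
  assumes "a * t + c \<noteq> 0"
  shows "t^4 * xln_deriv 4 a c t + 8 * t^3 * xln_deriv 3 a c t + 12 * t^2 * xln_deriv 2 a c t
           = 6 * t - 6 * c^4 * t / (a * t + c)^4"
proof -
  define u where "u = a * t + c"
  have u: "a * t + c = u" "u \<noteq> 0" and at: "a * t = u - c" using assms by (simp_all add: u_def)
  have X: "xln_deriv 2 a c t = a * (u + c) / u^2"
    "xln_deriv 3 a c t = - (a^2 * (u + 2 * c) / u^3)"
    "xln_deriv 4 a c t = 2 * a^3 * (u + 3 * c) / u^4"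
    by (simp_all add: xln_deriv_def numeral_eq_Suc u(1) add.assoc)
  have "t^4 * xln_deriv 4 a c t + 8 * t^3 * xln_deriv 3 a c t + 12 * t^2 * xln_deriv 2 a c t
      = t * (2 * (a * t)^3 * (u + 3 * c) - 8 * u * (a * t)^2 * (u + 2 * c) + 12 * u^2 * (a * t) * (u + c)) / u^4"
    unfolding X using u(2) by (simp add: field_simps eval_nat_numeral)
  also have "\<dots> = 6 * t - 6 * c^4 * t / u^4"
    using u(2) unfolding at by (simp add: field_simps eval_nat_numeral)
  finally show ?thesis by (simp add: u(1))
qed

lemma xln_difference_second_order:
  assumes "a * t + b \<noteq> 0" "a' * t + b' \<noteq> 0" "b^2 = \<kappa>^2" "b'^2 = \<kappa>^2"
  shows "t^2 * (B * (xln_deriv 2 a b t - xln_deriv 2 a' b' t))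
           = B * \<kappa>^2 * t * (1 / (a' * t + b')^2 - 1 / (a * t + b)^2)"
proof -
  have "t^2 * (B * (xln_deriv 2 a b t - xln_deriv 2 a' b' t))
          = B * (t^2 * xln_deriv 2 a b t - t^2 * xln_deriv 2 a' b' t)"
    by (simp add: algebra_simps)
  also have "\<dots> = B * \<kappa>^2 * t * (1 / (a' * t + b')^2 - 1 / (a * t + b)^2)"
    unfolding xln_second_order_identity[OF assms(1)] xln_second_order_identity[OF assms(2)] assms(3,4)
    by (simp add: algebra_simps)
  finally show ?thesis .
qed

lemma xln_difference_fourth_order:
  assumes "a * t + b \<noteq> 0" "a' * t + b' \<noteq> 0" "b^2 = \<kappa>^2" "b'^2 = \<kappa>^2"
  shows "t^4 * (B * (xln_deriv 4 a b t - xln_deriv 4 a' b' t))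
           + 8 * t^3 * (B * (xln_deriv 3 a b t - xln_deriv 3 a' b' t))
           + 12 * t^2 * (B * (xln_deriv 2 a b t - xln_deriv 2 a' b' t))
         = 6 * B * \<kappa>^4 * t * (1 / (a' * t + b')^4 - 1 / (a * t + b)^4)"
proof -
  have \<kappa>4: "b^4 = \<kappa>^4" "b'^4 = \<kappa>^4"
    using assms(3,4) by (metis power_mult num_double numeral_times_numeral)+
  have "t^4 * (B * (xln_deriv 4 a b t - xln_deriv 4 a' b' t))
           + 8 * t^3 * (B * (xln_deriv 3 a b t - xln_deriv 3 a' b' t))
           + 12 * t^2 * (B * (xln_deriv 2 a b t - xln_deriv 2 a' b' t))
      = B * ((t^4 * xln_deriv 4 a b t + 8 * t^3 * xln_deriv 3 a b t + 12 * t^2 * xln_deriv 2 a b t)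
           - (t^4 * xln_deriv 4 a' b' t + 8 * t^3 * xln_deriv 3 a' b' t + 12 * t^2 * xln_deriv 2 a' b' t))"
    by (simp add: algebra_simps)
  also have "\<dots> = 6 * B * \<kappa>^4 * t * (1 / (a' * t + b')^4 - 1 / (a * t + b)^4)"
    unfolding xln_fourth_order_identity[OF assms(1)] xln_fourth_order_identity[OF assms(2)] \<kappa>4
    by (simp add: algebra_simps)
  finally show ?thesis .
qed

lemma structure_function_expansion:
  fixes \<beta> :: nat and \<tau> \<alpha> \<gamma> B a b a' b' \<kappa> :: real and U :: "real set"
  assumes U: "open U" "\<tau> \<in> U"
    and pos: "\<And>t. t \<in> U \<Longrightarrow> a * t + b > 0 \<and> a' * t + b' > 0"
    and SN_eq: "\<And>t. t \<in> U \<Longrightarrow> \<forall>\<^sub>F N in at_top.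
           SN \<beta> N t = \<alpha> + \<gamma> * t + B * t * (Digamma ((a * t + b) * N + 1/2) - Digamma ((a' * t + b') * N + 1/2))"
    and \<kappa>: "\<kappa> \<noteq> 0" "b^2 = \<kappa>^2" "b'^2 = \<kappa>^2"
    and coeffs: "cbeta \<beta> = - 1 / (24 * \<kappa>^2)" "dbeta \<beta> = 7 / (5760 * \<kappa>^4)"
  shows "((\<lambda>N. SN \<beta> N \<tau>) \<longlongrightarrow> S0inf \<beta> \<tau>) at_top
       \<and> ((\<lambda>N. N^2 * (SN \<beta> N \<tau> - S0inf \<beta> \<tau>)) \<longlongrightarrow> S1inf \<beta> \<tau>) at_top
       \<and> ((\<lambda>N. N^4 * (SN \<beta> N \<tau> - S0inf \<beta> \<tau> - S1inf \<beta> \<tau> / N^2)) \<longlongrightarrow> S2inf \<beta> \<tau>) at_top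
       \<and> S1inf \<beta> \<tau> = cbeta \<beta> * \<tau>^2 * (deriv ^^ 2) (S0inf \<beta>) \<tau>
       \<and> S2inf \<beta> \<tau> = dbeta \<beta> * (\<tau>^4 * (deriv ^^ 4) (S0inf \<beta>) \<tau>
                                 + 8 * \<tau>^3 * (deriv ^^ 3) (S0inf \<beta>) \<tau>
                                 + 12 * \<tau>^2 * (deriv ^^ 2) (S0inf \<beta>) \<tau>)"
proof -
  define u u' where "u t = a * t + b" and "u' t = a' * t + b'" for t
  have expansion: "((\<lambda>N. N^4 * (SN \<beta> N t - (\<alpha> + \<gamma> * t + B * t * (ln (u t) - ln (u' t)))
          - B * t / 24 * (1 / u t ^ 2 - 1 / u' t ^ 2) / N^2
          - - 7 * (B * t) / 960 * (1 / u t ^ 4 - 1 / u' t ^ 4) / N^4)) \<longlongrightarrow> 0) at_top"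
    if "t \<in> U" for t
    using Digamma_difference_expansion[of "u t" "u' t" "\<lambda>N. SN \<beta> N t" "\<alpha> + \<gamma> * t" "B * t"]
      pos[OF that] SN_eq[OF that] by (simp add: u_def u'_def)
  have S0: "S0inf \<beta> t = \<alpha> + \<gamma> * t + B * t * (ln (u t) - ln (u' t))" if "t \<in> U" for t
    unfolding S0inf_def by (rule tendsto_Lim[OF _ expansion_coefficients_tendsto(1)[OF expansion[OF that]]]) simp
  note limits = expansion_coefficients_tendsto[OF expansion[OF U(2)], folded S0[OF U(2)]]
  have S1: "S1inf \<beta> \<tau> = B * \<tau> / 24 * (1 / u \<tau> ^ 2 - 1 / u' \<tau> ^ 2)"
    unfolding S1inf_def by (rule tendsto_Lim[OF _ limits(2)]) simp
  have S2: "S2inf \<beta> \<tau> = - 7 * (B * \<tau>) / 960 * (1 / u \<tau> ^ 4 - 1 / u' \<tau> ^ 4)"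
    unfolding S2inf_def S1 by (rule tendsto_Lim[OF _ limits(3)]) simp
  have "S0inf \<beta> t = \<alpha> + \<gamma> * t + B * (xln_deriv 0 a b t - xln_deriv 0 a' b' t)" if "t \<in> U" for t
    by (simp add: S0[OF that] xln_deriv_def u_def u'_def algebra_simps)
  note derivs = xln_difference_higher_deriv[OF U pos this]
  have D: "(deriv ^^ 2) (S0inf \<beta>) \<tau> = B * (xln_deriv 2 a b \<tau> - xln_deriv 2 a' b' \<tau>)"
    "(deriv ^^ 3) (S0inf \<beta>) \<tau> = B * (xln_deriv 3 a b \<tau> - xln_deriv 3 a' b' \<tau>)"
    "(deriv ^^ 4) (S0inf \<beta>) \<tau> = B * (xln_deriv 4 a b \<tau> - xln_deriv 4 a' b' \<tau>)"
    by (simp_all add: derivs)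
  have u_nz: "a * \<tau> + b \<noteq> 0" "a' * \<tau> + b' \<noteq> 0" using pos[OF U(2)] by auto
  have second: "\<tau>^2 * (deriv ^^ 2) (S0inf \<beta>) \<tau> = B * \<kappa>^2 * \<tau> * (1 / u' \<tau> ^ 2 - 1 / u \<tau> ^ 2)"
    unfolding D u_def u'_def by (rule xln_difference_second_order[OF u_nz \<kappa>(2,3)])
  have fourth: "\<tau>^4 * (deriv ^^ 4) (S0inf \<beta>) \<tau> + 8 * \<tau>^3 * (deriv ^^ 3) (S0inf \<beta>) \<tau>
                  + 12 * \<tau>^2 * (deriv ^^ 2) (S0inf \<beta>) \<tau>
                = 6 * B * \<kappa>^4 * \<tau> * (1 / u' \<tau> ^ 4 - 1 / u \<tau> ^ 4)"
    unfolding D u_def u'_def by (rule xln_difference_fourth_order[OF u_nz \<kappa>(2,3)])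
  have "S1inf \<beta> \<tau> = cbeta \<beta> * (\<tau>^2 * (deriv ^^ 2) (S0inf \<beta>) \<tau>)"
    unfolding second S1 coeffs using \<kappa>(1) by (simp add: field_simps)
  hence "S1inf \<beta> \<tau> = cbeta \<beta> * \<tau>^2 * (deriv ^^ 2) (S0inf \<beta>) \<tau>"
    by (simp only: mult.assoc)
  moreover have "S2inf \<beta> \<tau> = dbeta \<beta> * (\<tau>^4 * (deriv ^^ 4) (S0inf \<beta>) \<tau>
      + 8 * \<tau>^3 * (deriv ^^ 3) (S0inf \<beta>) \<tau> + 12 * \<tau>^2 * (deriv ^^ 2) (S0inf \<beta>) \<tau>)"
    unfolding fourth S2 coeffs using \<kappa>(1) by (simp add: field_simps)
  ultimately show ?thesis
    using limits(1) limits(2)[folded S1] limits(3)[folded S1 S2] by blast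
qed

lemma SN_1_below_1:
  assumes "0 < t" "t < 1"
  shows "SN 1 N t = 2 * t - t * (Digamma ((t + 1/2) * N + 1/2) - Digamma (N / 2 + 1/2))"
  using assms by (simp add: SN_def S1N_def algebra_simps add_divide_distrib)

lemma SN_1_above_1:
  assumes "1 < t"
  shows "SN 1 N t = 2 - t * (Digamma ((t + 1/2) * N + 1/2) - Digamma ((t - 1/2) * N + 1/2))"
  using assms by (simp add: SN_def S1N_def algebra_simps add_divide_distrib diff_divide_distrib)

lemma SN_4_below_1:
  assumes "0 < t" "t < 1"
  shows "SN 4 N t = t / 2 + t / 4 * (Digamma (N + 1/2) - Digamma ((1 - t) * N + 1/2))"
  using assms by (simp add: SN_def S4N_def algebra_simps diff_divide_distrib)

lemma SN_4_between_1_2: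
  assumes "1 < t" "t < 2" "N > 1 / (2 - t)"
  shows "SN 4 N t = t / 2 + t / 4 * (Digamma (N + 1/2) - Digamma ((t - 1) * N + 1/2))"
proof -
  have "N > 0" using assms by (smt (verit) divide_pos_pos)
  hence "t < 2 - 1 / N" using assms by (simp add: field_simps)
  thus ?thesis using assms by (simp add: SN_def S4N_def algebra_simps diff_divide_distrib)
qed

lemma SN_4_above_2:
  assumes "2 < t" "N > 0"
  shows "SN 4 N t = 1"
proof -
  have "\<not> t < 2 - 1 / N" using assms by (smt (verit) divide_pos_pos)
  thus ?thesis using assms by (simp add: SN_def S4N_def)
qed

lemma SN_local_digamma_representation:
  fixes \<beta> :: nat and \<tau> :: real
  assumes "\<beta> \<in> {1, 4}" and "\<tau> > 0" and "\<tau> \<noteq> 1" and "\<beta> = 4 \<longrightarrow> \<tau> \<noteq> 2"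
  obtains U :: "real set" and \<alpha> \<gamma> B a b a' b' \<kappa> :: real where "open U" "\<tau> \<in> U"
    "\<And>t. t \<in> U \<Longrightarrow> a * t + b > 0 \<and> a' * t + b' > 0"
    "\<And>t. t \<in> U \<Longrightarrow> \<forall>\<^sub>F N in at_top.
       SN \<beta> N t = \<alpha> + \<gamma> * t + B * t * (Digamma ((a * t + b) * N + 1/2) - Digamma ((a' * t + b') * N + 1/2))"
    "\<kappa> \<noteq> 0" "b^2 = \<kappa>^2" "b'^2 = \<kappa>^2"
    "cbeta \<beta> = - 1 / (24 * \<kappa>^2)" "dbeta \<beta> = 7 / (5760 * \<kappa>^4)"
proof -
  consider "\<beta> = 1" "\<tau> < 1" | "\<beta> = 1" "\<tau> > 1" | "\<beta> = 4" "\<tau> < 1"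
    | "\<beta> = 4" "1 < \<tau>" "\<tau> < 2" | "\<beta> = 4" "\<tau> > 2"
    using assms by fastforce
  then show ?thesis
  proof cases
    case 1
    show ?thesis
      by (rule that[unfolded 1(1), where U = "{0<..<1}" and \<alpha> = 0 and \<gamma> = 2 and B = "-1"
            and a = 1 and b = "1/2" and a' = 0 and b' = "1/2" and \<kappa> = "1/2"])
        (use 1(2) assms(2) in \<open>auto intro!: always_eventually simp: SN_1_below_1[unfolded One_nat_def] cbeta_def dbeta_def power_divide\<close>)
  next
    case 2
    show ?thesis
      by (rule that[unfolded 2(1), where U = "{1<..}" and \<alpha> = 2 and \<gamma> = 0 and B = "-1"
            and a = 1 and b = "1/2" and a' = 1 and b' = "-1/2" and \<kappa> = "1/2"])
        (use 2(2) in \<open>auto intro!: always_eventually simp: SN_1_above_1[unfolded One_nat_def] cbeta_def dbeta_def power_divide\<close>)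
  next
    case 3
    show ?thesis
      by (rule that[unfolded 3(1), where U = "{0<..<1}" and \<alpha> = 0 and \<gamma> = "1/2" and B = "1/4"
            and a = 0 and b = 1 and a' = "-1" and b' = 1 and \<kappa> = 1])
        (use 3(2) assms(2) in \<open>auto intro!: always_eventually simp: SN_4_below_1 cbeta_def dbeta_def power_divide\<close>)
  next
    case 4
    show ?thesis
    proof (rule that[unfolded 4(1), where U = "{1<..<2}" and \<alpha> = 0 and \<gamma> = "1/2" and B = "1/4"
            and a = 0 and b = 1 and a' = 1 and b' = "-1" and \<kappa> = 1])
      show "\<forall>\<^sub>F N in at_top. SN 4 N t = 0 + 1/2 * t + 1/4 * t
              * (Digamma ((0 * t + 1) * N + 1/2) - Digamma ((1 * t + -1) * N + 1/2))"
        if "t \<in> {1<..<2}" for t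
        using eventually_gt_at_top[of "1 / (2 - t)"]
        by eventually_elim (use that in \<open>simp add: SN_4_between_1_2\<close>)
    qed (use 4(2,3) in \<open>auto simp: cbeta_def dbeta_def\<close>)
  next
    case 5
    show ?thesis
    proof (rule that[unfolded 5(1), where U = "{2<..}" and \<alpha> = 1 and \<gamma> = 0 and B = 0
            and a = 0 and b = 1 and a' = 0 and b' = 1 and \<kappa> = 1])
      show "\<forall>\<^sub>F N in at_top. SN 4 N t = 1 + 0 * t + 0 * t
              * (Digamma ((0 * t + 1) * N + 1/2) - Digamma ((0 * t + 1) * N + 1/2))"
        if "t \<in> {2<..}" for t
        using eventually_gt_at_top[of 0] by eventually_elim (use that in \<open>simp add: SN_4_above_2\<close>)
    qed (use 5(2) in \<open>auto simp: cbeta_def dbeta_def\<close>)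
  qed
qed

theorem mainTheorem8:
  fixes \<beta> :: nat and \<tau> :: real
  assumes "\<beta> \<in> {1, 4}" and "\<tau> > 0" and "\<tau> \<noteq> 1" and "\<beta> = 4 \<longrightarrow> \<tau> \<noteq> 2"
  shows "((\<lambda>N. SN \<beta> N \<tau>) \<longlongrightarrow> S0inf \<beta> \<tau>) at_top
       \<and> ((\<lambda>N. N^2 * (SN \<beta> N \<tau> - S0inf \<beta> \<tau>)) \<longlongrightarrow> S1inf \<beta> \<tau>) at_top
       \<and> ((\<lambda>N. N^4 * (SN \<beta> N \<tau> - S0inf \<beta> \<tau> - S1inf \<beta> \<tau> / N^2)) \<longlongrightarrow> S2inf \<beta> \<tau>) at_top
       \<and> S1inf \<beta> \<tau> = cbeta \<beta> * \<tau>^2 * (deriv ^^ 2) (S0inf \<beta>) \<tau>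
       \<and> S2inf \<beta> \<tau> = dbeta \<beta> * (\<tau>^4 * (deriv ^^ 4) (S0inf \<beta>) \<tau>
                                 + 8 * \<tau>^3 * (deriv ^^ 3) (S0inf \<beta>) \<tau>
                                 + 12 * \<tau>^2 * (deriv ^^ 2) (S0inf \<beta>) \<tau>)"
  by (rule SN_local_digamma_representation[OF assms]) (rule structure_function_expansion, assumption+)

end
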